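(* Let $d\ge2$ and let $\mathcal{G}$ be a stochastic subgroup of $\mathrm{O}(d^2)$. Then there exists a qplex $Q$ such that $\mathcal{G}\subseteq\mathcal{G}(Q)$ (in particular $RQ=Q$ for all $R\in\mathcal{G}$).
   Context: Fix an integer $d\ge 2$. $\mathrm{O}(d^2)$ is the group of real orthogonal $d^2\times d^2$ matrices. $\langle\cdot,\cdot\rangle$ is the standard inner product on $\mathbb{R}^{d^2}$, $\|\cdot\|$ the Euclidean norm. $\Delta=\{p\in\mathbb{R}^{d^2}: p(i)\ge0,\ \sum_ip(i)=1\}$; $H=\{u\in\mathbb{R}^{d^2}:\sum_i u(i)=1\}$; $c=(1/d^2,\dots,1/d^2)$. For $A\subseteq H$ the polar is $A^*=\{u\in H:\langle u,v\rangle\ge\frac{1}{d(d+1)}\ \forall v\in A\}$. Out-ball $B_{\rm o}=\{u\in H:\|u-c\|\le r_{\rm o}\}$, $r_{\rm o}^2=\frac{d-1}{d^2(d+1)}$. A qplex is a set $Q\subseteq\Delta\cap B_{\rm o}$ with $Q^*=Q$. A measurement is an array $r(i|j)\ge0$, $i,j\in\{1,\dots,d^2\}$, with $\sum_i r(i|j)=1$ for every $j$; for $q\in Q$, $q_r(i)=\sum_j[(d+1)q(j)-\frac1d]r(i|j)$; it is $Q$-preserving if $\{q_r:q\in Q\}=Q$; its stretched measurement matrix is $R_{ij}=(d+1)r(i|j)-\frac1d\sum_k r(i|k)$. The preservation group $\mathcal{G}(Q)$ is the set of stretched measurement matrices of $Q$-preserving measurements. A subgroup $\mathcal{G}\subseteq\mathrm{O}(d^2)$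 is stochastic if every $R\in\mathcal{G}$ satisfies $R_{ij}\ge-\frac1d$ for all $i,j$ and $Rc=c$. *)

theory Defs
  imports "HOL-Analysis.Analysis"
begin

text \<open>Vectors in R^(d^2) are modelled as real^'n with CARD('n) = d^2;
  d^2 x d^2 matrices as real^'n^'n (row index first).\<close>

definition cvec :: "real^'n" where
  "cvec = (\<chi> i. 1 / real CARD('n))"

definition Hplane :: "(real^'n) set" where
  "Hplane = {u. (\<Sum>i\<in>UNIV. u $ i) = 1}"

definition Simplex :: "(real^'n) set" where
  "Simplex = {p. (\<forall>i. p $ i \<ge> 0) \<and> (\<Sum>i\<in>UNIV. p $ i) = 1}"

definition polar :: "nat \<Rightarrow> (real^'n) set \<Rightarrow> (real^'n) set" where
  "polar d A = {u \<in> Hplane. \<forall>v\<in>A. inner u v \<ge> 1 / (real d * (real d + 1))}"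

definition out_radius_sq :: "nat \<Rightarrow> real" where
  "out_radius_sq d = (real d - 1) / ((real d)^2 * (real d + 1))"

definition out_ball :: "nat \<Rightarrow> (real^'n) set" where
  "out_ball d = {u \<in> Hplane. (norm (u - cvec))^2 \<le> out_radius_sq d}"

definition qplex :: "nat \<Rightarrow> (real^'n) set \<Rightarrow> bool" where
  "qplex d Q \<longleftrightarrow> Q \<subseteq> Simplex \<inter> out_ball d \<and> polar d Q = Q"

text \<open>A measurement r(i|j) = r $ i $ j.\<close>
definition measurement :: "real^'n^'n \<Rightarrow> bool" where
  "measurement r \<longleftrightarrow> (\<forall>i j. r $ i $ j \<ge> 0) \<and> (\<forall>j. (\<Sum>i\<in>UNIV. r $ i $ j) = 1)"

definition meas_apply :: "nat \<Rightarrow> real^'n^'n \<Rightarrow> real^'n \<Rightarrow> real^'n" where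
  "meas_apply d r q = (\<chi> i. \<Sum>j\<in>UNIV. ((real d + 1) * q $ j - 1 / real d) * r $ i $ j)"

definition Q_preserving :: "nat \<Rightarrow> (real^'n) set \<Rightarrow> real^'n^'n \<Rightarrow> bool" where
  "Q_preserving d Q r \<longleftrightarrow> measurement r \<and> (meas_apply d r) ` Q = Q"

definition stretched :: "nat \<Rightarrow> real^'n^'n \<Rightarrow> real^'n^'n" where
  "stretched d r = (\<chi> i j. (real d + 1) * r $ i $ j - (1 / real d) * (\<Sum>k\<in>UNIV. r $ i $ k))"

definition preservation_group :: "nat \<Rightarrow> (real^'n) set \<Rightarrow> (real^'n^'n) set" where
  "preservation_group d Q = {stretched d r | r. Q_preserving d Q r}"

definition orth_subgroup :: "(real^'n^'n) set \<Rightarrow> bool" where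
  "orth_subgroup G \<longleftrightarrow> (\<forall>R\<in>G. orthogonal_matrix R) \<and> mat 1 \<in> G
     \<and> (\<forall>R\<in>G. \<forall>S\<in>G. R ** S \<in> G) \<and> (\<forall>R\<in>G. matrix_inv R \<in> G)"

definition stochastic_subgroup :: "nat \<Rightarrow> (real^'n^'n) set \<Rightarrow> bool" where
  "stochastic_subgroup d G \<longleftrightarrow> orth_subgroup G \<and>
     (\<forall>R\<in>G. (\<forall>i j. R $ i $ j \<ge> - 1 / real d) \<and> R *v cvec = cvec)"

end

theory Submission
  imports Defs
begin

text \<open>Centre everything at c. On the zero-sum hyperplane V the polar condition
  \<open>\<langle>u, v\<rangle> \<ge> 1/(d(d+1))\<close> becomes \<open>\<langle>x, y\<rangle> \<ge> -k\<close> with \<open>k = 1/(d\<^sup>2(d+1))\<close>.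
  By Zorn's lemma there is a maximal G-invariant set S \<subseteq> V whose points pairwise satisfy
  \<open>\<langle>x, y\<rangle> \<ge> -k\<close> and which contains a small ball and the G-orbits of the vertices
  \<open>(e\<^sub>j - c)/(d+1)\<close>; the entry bound \<open>R\<^sub>i\<^sub>j \<ge> -1/d\<close> is exactly what makes these orbits
  compatible. Maximality forces S to be its own polar: a polar point whose G-orbit is
  compatible with itself could be added to S, and otherwise a suitably rescaled point of its
  orbit lies in S but is incompatible with it. Containing the ball puts the polar inside
  the out-ball and containing the vertices puts it inside the simplex, so c + S is a qplex.
  Every R \<in> G maps it onto itself and is the stretched matrix of the measurement
  \<open>r(i|j) = (R\<^sub>i\<^sub>j + 1/d)/(d+1)\<close>.\<close>

lemma orthogonal_matrix_inner:
  fixes R :: "real^'n^'n"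
  assumes "orthogonal_matrix R"
  shows "inner (R *v x) (R *v y) = inner x y"
proof -
  have "inner (R *v x) (R *v y) = inner x (transpose R *v (R *v y))"
    by (metis dot_lmul_matrix vector_transpose_matrix)
  also have "\<dots> = inner x y"
    using assms
    by (simp add: matrix_vector_mul_assoc orthogonal_matrix_def del: transpose_matrix_vector)
  finally show ?thesis .
qed

lemma orthogonal_matrix_norm:
  fixes R :: "real^'n^'n"
  assumes "orthogonal_matrix R"
  shows "norm (R *v x) = norm x"
  using orthogonal_matrix_inner[OF assms, of x x] by (simp add: norm_eq_sqrt_inner)

lemma orthogonal_matrix_matrix_inv:
  fixes R :: "real^'n^'n"
  assumes "orthogonal_matrix R"
  shows "R ** matrix_inv R = mat 1" "matrix_inv R ** R = mat 1"
proof -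
  have "\<exists>A. R ** A = mat 1 \<and> A ** R = mat 1"
    using assms unfolding orthogonal_matrix_def by blast
  from someI_ex[OF this] show "R ** matrix_inv R = mat 1" "matrix_inv R ** R = mat 1"
    unfolding matrix_inv_def by auto
qed

lemma orthogonal_matrix_inner_adjoint:
  fixes R :: "real^'n^'n"
  assumes "orthogonal_matrix R"
  shows "inner (R *v x) z = inner x (matrix_inv R *v z)"
  using orthogonal_matrix_inner[OF assms, of x "matrix_inv R *v z"]
  by (simp add: matrix_vector_mul_assoc orthogonal_matrix_matrix_inv[OF assms])

definition pairwise_inner_ge :: "real \<Rightarrow> (real^'n) set \<Rightarrow> bool" where
  "pairwise_inner_ge k S \<longleftrightarrow> (\<forall>x\<in>S. \<forall>y\<in>S. - k \<le> inner x y)"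

definition invariant_under :: "(real^'n^'n) set \<Rightarrow> (real^'n) set \<Rightarrow> bool" where
  "invariant_under G S \<longleftrightarrow> (\<forall>R\<in>G. \<forall>x\<in>S. R *v x \<in> S)"

definition lower_polar :: "(real^'n) set \<Rightarrow> real \<Rightarrow> (real^'n) set \<Rightarrow> (real^'n) set" where
  "lower_polar V k S = {y \<in> V. \<forall>x\<in>S. - k \<le> inner y x}"

definition invariant_pairwise_sets ::
    "(real^'n) set \<Rightarrow> real \<Rightarrow> (real^'n^'n) set \<Rightarrow> (real^'n) set \<Rightarrow> (real^'n) set set" where
  "invariant_pairwise_sets V k G B =
     {S. B \<subseteq> S \<and> S \<subseteq> V \<and> pairwise_inner_ge k S \<and> invariant_under G S}"

definition maximal_in :: "'a set set \<Rightarrow> 'a set \<Rightarrow> bool" where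
  "maximal_in F S \<longleftrightarrow> S \<in> F \<and> (\<forall>X\<in>F. S \<subseteq> X \<longrightarrow> X = S)"

lemma invariant_pairwise_sets_has_maximal:
  assumes "B \<in> invariant_pairwise_sets V k G B"
  shows "\<exists>S. maximal_in (invariant_pairwise_sets V k G B) S"
  unfolding maximal_in_def Bex_def[symmetric]
proof (rule Zorn_Lemma2, intro ballI)
  fix C assume C: "C \<in> chains (invariant_pairwise_sets V k G B)"
  show "\<exists>U\<in>invariant_pairwise_sets V k G B. \<forall>X\<in>C. X \<subseteq> U"
  proof (cases "C = {}")
    case True
    then show ?thesis using assms by auto
  next
    case False
    have CF: "C \<subseteq> invariant_pairwise_sets V k G B" and ch: "chain\<^sub>\<subseteq> C"
      using C by (auto simp: chains_def)
    have "pairwise_inner_ge k (\<Union>C)"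
      unfolding pairwise_inner_ge_def
    proof (intro ballI)
      fix x y assume "x \<in> \<Union>C" "y \<in> \<Union>C"
      then obtain X Y where XY: "X \<in> C" "Y \<in> C" "x \<in> X" "y \<in> Y" by auto
      then have "X \<subseteq> Y \<or> Y \<subseteq> X" using ch by (auto simp: chain_subset_def)
      with XY CF show "- k \<le> inner x y"
        unfolding invariant_pairwise_sets_def pairwise_inner_ge_def by blast
    qed
    moreover have "invariant_under G (\<Union>C)"
      using CF unfolding invariant_pairwise_sets_def invariant_under_def by blast
    moreover have "B \<subseteq> \<Union>C" "\<Union>C \<subseteq> V"
      using False CF unfolding invariant_pairwise_sets_def by blast+
    ultimately show ?thesis
      by (intro bexI[of _ "\<Union>C"]) (auto simp: invariant_pairwise_sets_def)
  qed
qed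

lemma lower_polar_norm_bound:
  assumes V: "subspace V" and ball: "{x \<in> V. norm x \<le> r} \<subseteq> S"
    and r: "0 \<le> r" and y: "y \<in> lower_polar V k S"
  shows "r * norm y \<le> k"
proof (cases "y = 0")
  case True
  have "0 \<in> S" using ball r V by (auto simp: subspace_0)
  then show ?thesis using y True by (auto simp: lower_polar_def)
next
  case False
  define w where "w = (- r / norm y) *\<^sub>R y"
  have "y \<in> V" using y by (simp add: lower_polar_def)
  then have "w \<in> V" unfolding w_def by (rule subspace_scale[OF V])
  moreover have "norm w = r" using False r by (simp add: w_def)
  ultimately have "w \<in> S" using ball by auto
  then have "- k \<le> inner y w" using y by (simp add: lower_polar_def)
  also have "inner y w = - r * norm y"
    using False by (simp add: w_def power2_norm_eq_inner[symmetric] power2_eq_square)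
  finally show ?thesis by simp
qed

lemma lower_polar_scale:
  assumes V: "subspace V" and k: "0 \<le> k" and y: "y \<in> lower_polar V k S"
    and t: "0 \<le> t" "t \<le> 1"
  shows "t *\<^sub>R y \<in> lower_polar V k S"
proof -
  have "t *\<^sub>R y \<in> V" using y V by (simp add: lower_polar_def subspace_scale)
  moreover have "- k \<le> inner (t *\<^sub>R y) x" if "x \<in> S" for x
  proof -
    have "- k \<le> inner y x" using y that by (simp add: lower_polar_def)
    then have "t * (- k) \<le> t * inner y x" using t by (intro mult_left_mono) auto
    moreover have "- k \<le> t * (- k)" using t k by (simp add: mult_left_le_one_le)
    ultimately show ?thesis by simp
  qed
  ultimately show ?thesis by (simp add: lower_polar_def)
qed

lemma orth_subgroupD:
  assumes "orth_subgroup G"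
  shows orth_subgroup_orthogonal: "R \<in> G \<Longrightarrow> orthogonal_matrix R"
    and orth_subgroup_one: "mat 1 \<in> G"
    and orth_subgroup_mult: "R \<in> G \<Longrightarrow> S \<in> G \<Longrightarrow> R ** S \<in> G"
    and orth_subgroup_matrix_inv: "R \<in> G \<Longrightarrow> matrix_inv R \<in> G"
  using assms by (auto simp: orth_subgroup_def)

lemma invariant_under_image_eq:
  assumes G: "orth_subgroup G" and S: "invariant_under G S" and R: "R \<in> G"
  shows "(\<lambda>x. R *v x) ` S = S"
proof
  show "(\<lambda>x. R *v x) ` S \<subseteq> S" using S R by (auto simp: invariant_under_def)
  show "S \<subseteq> (\<lambda>x. R *v x) ` S"
  proof
    fix x assume "x \<in> S"
    then have "matrix_inv R *v x \<in> S"
      using S orth_subgroup_matrix_inv[OF G R] by (auto simp: invariant_under_def)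
    moreover have "x = R *v (matrix_inv R *v x)"
      using orth_subgroup_orthogonal[OF G R]
      by (simp add: matrix_vector_mul_assoc orthogonal_matrix_matrix_inv)
    ultimately show "x \<in> (\<lambda>x. R *v x) ` S" by blast
  qed
qed

context
  fixes V :: "(real^'n) set" and k :: real and G :: "(real^'n^'n) set"
  assumes G: "orth_subgroup G" and V: "subspace V" and G_V: "invariant_under G V" and k: "0 < k"
begin

lemma lower_polar_invariant:
  assumes S: "invariant_under G S"
  shows "invariant_under G (lower_polar V k S)"
  unfolding invariant_under_def
proof (intro ballI)
  fix R y assume R: "R \<in> G" and y: "y \<in> lower_polar V k S"
  have "R *v y \<in> V" using y R G_V by (auto simp: lower_polar_def invariant_under_def)
  moreover have "- k \<le> inner (R *v y) x" if "x \<in> S" for x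
  proof -
    have "matrix_inv R *v x \<in> S"
      using S orth_subgroup_matrix_inv[OF G R] that by (auto simp: invariant_under_def)
    then show ?thesis
      using y orth_subgroup_orthogonal[OF G R] by (simp add: orthogonal_matrix_inner_adjoint lower_polar_def)
  qed
  ultimately show "R *v y \<in> lower_polar V k S" by (simp add: lower_polar_def)
qed

lemma maximal_contains_compatible_orbit:
  assumes S: "maximal_in (invariant_pairwise_sets V k G B) S"
    and w: "w \<in> lower_polar V k S" and w_orbit: "\<forall>M\<in>G. - k \<le> inner w (M *v w)"
  shows "w \<in> S"
proof -
  define S' where "S' = S \<union> (\<lambda>R. R *v w) ` G"
  have SF: "B \<subseteq> S" "S \<subseteq> V" "pairwise_inner_ge k S" "invariant_under G S"
    using S by (auto simp: maximal_in_def invariant_pairwise_sets_def)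
  have orbit: "R *v w \<in> lower_polar V k S" if "R \<in> G" for R
    using lower_polar_invariant[OF SF(4)] that w by (auto simp: invariant_under_def)
  have "pairwise_inner_ge k S'"
    unfolding pairwise_inner_ge_def
  proof (intro ballI)
    fix x y assume x: "x \<in> S'" and y: "y \<in> S'"
    consider "x \<in> S" "y \<in> S"
      | R where "R \<in> G" "x = R *v w" "y \<in> S"
      | R where "R \<in> G" "x \<in> S" "y = R *v w"
      | R R' where "R \<in> G" "R' \<in> G" "x = R *v w" "y = R' *v w"
      using x y by (auto simp: S'_def)
    then show "- k \<le> inner x y"
    proof cases
      case 1
      then show ?thesis using SF(3) by (simp add: pairwise_inner_ge_def)
    next
      case 2
      then show ?thesis using orbit by (auto simp: lower_polar_def)
    next
      case 3
      then show ?thesis using orbit by (auto simp: lower_polar_def inner_commute)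
    next
      case (4 R R')
      then have "inner x y = inner w ((matrix_inv R ** R') *v w)"
        using orth_subgroup_orthogonal[OF G]
        by (simp add: orthogonal_matrix_inner_adjoint matrix_vector_mul_assoc)
      moreover have "matrix_inv R ** R' \<in> G"
        using 4 by (intro orth_subgroup_mult[OF G] orth_subgroup_matrix_inv[OF G])
      ultimately show ?thesis using w_orbit by simp
    qed
  qed
  moreover have "invariant_under G S'"
    using SF(4) orth_subgroup_mult[OF G]
    by (auto simp: S'_def invariant_under_def matrix_vector_mul_assoc)
  moreover have "S' \<subseteq> V" using SF(2) orbit by (auto simp: S'_def lower_polar_def)
  ultimately have "S' \<in> invariant_pairwise_sets V k G B"
    using SF(1) by (auto simp: invariant_pairwise_sets_def S'_def)
  then have "S' = S" using S by (auto simp: maximal_in_def S'_def)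
  moreover have "w \<in> S'"
    using orth_subgroup_one[OF G] by (auto simp: S'_def image_iff intro!: bexI[of _ "mat 1"])
  ultimately show ?thesis by simp
qed

lemma maximal_orbit_inner_bound_sqrt:
  assumes S: "maximal_in (invariant_pairwise_sets V k G B) S"
    and y: "y \<in> lower_polar V k S" and M: "M \<in> G"
    and m: "k \<le> m" and bound: "\<And>N. N \<in> G \<Longrightarrow> - inner y (N *v y) \<le> m"
  shows "- inner y (M *v y) \<le> sqrt (k * m)"
proof -
  have m_pos: "0 < m" using k m by simp
  \<comment> \<open>Scaled by t, the orbit of M y becomes self-compatible, so maximality puts it into S.\<close>
  define t where "t = sqrt (k / m)"
  have t_pos: "0 < t" and t_le: "t \<le> 1" and t_sq: "t^2 = k / m"
    using k m m_pos by (auto simp: t_def)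
  define w where "w = t *\<^sub>R (M *v y)"
  have "M *v y \<in> lower_polar V k S"
    using lower_polar_invariant S M y
    by (auto simp: maximal_in_def invariant_pairwise_sets_def invariant_under_def)
  then have "w \<in> lower_polar V k S"
    unfolding w_def using k t_pos t_le by (intro lower_polar_scale[OF V]) auto
  moreover have "- k \<le> inner w (N *v w)" if N: "N \<in> G" for N
  proof -
    define N' where "N' = matrix_inv M ** N ** M"
    have N': "N' \<in> G"
      unfolding N'_def using M N by (intro orth_subgroup_mult[OF G] orth_subgroup_matrix_inv[OF G])
    have "inner w (N *v w) = t^2 * inner y (N' *v y)"
      using orth_subgroup_orthogonal[OF G M]
      by (simp add: w_def matrix_vector_mult_scaleR power2_eq_square orthogonal_matrix_inner_adjoint
          N'_def matrix_vector_mul_assoc matrix_mul_assoc)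
    moreover have "t^2 * (- m) \<le> t^2 * inner y (N' *v y)"
      using bound[OF N'] by (intro mult_left_mono) auto
    ultimately show ?thesis using t_sq m_pos by simp
  qed
  ultimately have "w \<in> S" using maximal_contains_compatible_orbit[OF S] by blast
  then have "- k \<le> inner y w" using y by (simp add: lower_polar_def)
  then have "t * (- inner y (M *v y)) \<le> t * sqrt (k * m)"
    using k m_pos by (simp add: w_def t_def real_sqrt_mult[symmetric])
  then show ?thesis using t_pos mult_le_cancel_left_pos by blast
qed

lemma maximal_orbit_inner_ge:
  assumes S: "maximal_in (invariant_pairwise_sets V k G B) S"
    and y: "y \<in> lower_polar V k S" and M: "M \<in> G"
  shows "- k \<le> inner y (M *v y)"
proof (rule ccontr)
  \<comment> \<open>For the supremum m of the orbit values the previous lemma gives \<open>m \<le> sqrt (k * m)\<close>.\<close>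
  assume M_bad: "\<not> - k \<le> inner y (M *v y)"
  define F where "F = (\<lambda>N. - inner y (N *v y)) ` G"
  have "- inner y (N *v y) \<le> (norm y)^2" if "N \<in> G" for N
    using norm_cauchy_schwarz[of "-y" "N *v y"]
    by (simp add: orthogonal_matrix_norm orth_subgroup_orthogonal[OF G that] power2_eq_square)
  then have F_bdd: "bdd_above F" unfolding F_def by (intro bdd_aboveI2)
  have F_ne: "F \<noteq> {}" using M by (auto simp: F_def)
  have le_Sup: "- inner y (N *v y) \<le> Sup F" if "N \<in> G" for N
    using F_bdd that by (intro cSup_upper) (auto simp: F_def)
  have k_less: "k < Sup F" using le_Sup[OF M] M_bad by simp
  have Sup_le: "Sup F \<le> sqrt (k * Sup F)"
  proof (rule cSup_least[OF F_ne])
    fix x assume "x \<in> F"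
    then obtain N where "N \<in> G" "x = - inner y (N *v y)" by (auto simp: F_def)
    then show "x \<le> sqrt (k * Sup F)"
      using maximal_orbit_inner_bound_sqrt[OF S y _ _ le_Sup] k_less by simp
  qed
  have "sqrt (k * Sup F) < sqrt (Sup F * Sup F)"
    using k k_less by (simp only: real_sqrt_less_iff) simp
  with Sup_le k k_less show False by simp
qed

lemma maximal_lower_polar_eq:
  assumes S: "maximal_in (invariant_pairwise_sets V k G B) S"
  shows "lower_polar V k S = S"
proof
  show "lower_polar V k S \<subseteq> S"
    using maximal_contains_compatible_orbit[OF S] maximal_orbit_inner_ge[OF S] by blast
  show "S \<subseteq> lower_polar V k S"
    using S
    by (auto simp: maximal_in_def invariant_pairwise_sets_def pairwise_inner_ge_def lower_polar_def)
qed

end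

definition zero_sum_vectors :: "(real^'n) set" where
  "zero_sum_vectors = {x. inner cvec x = 0}"

lemma inner_cvec: "inner (cvec :: real^'n) x = (\<Sum>i\<in>UNIV. x $ i) / real CARD('n)"
  by (simp add: cvec_def inner_vec_def sum_divide_distrib)

lemma inner_cvec_cvec: "inner (cvec :: real^'n) cvec = 1 / real CARD('n)"
  using inner_cvec[of cvec] by (simp add: cvec_def)

lemma inner_axis_cvec: "inner (axis j 1) (cvec :: real^'n) = 1 / real CARD('n)"
  by (simp add: inner_axis' cvec_def)

lemma subspace_zero_sum_vectors: "subspace (zero_sum_vectors :: (real^'n) set)"
  by (auto simp: subspace_def zero_sum_vectors_def inner_add_right)

lemma Hplane_iff_zero_sum: "(u :: real^'n) \<in> Hplane \<longleftrightarrow> u - cvec \<in> zero_sum_vectors"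
proof -
  have "u \<in> Hplane \<longleftrightarrow> inner cvec u = 1 / real CARD('n)"
    by (simp add: Hplane_def inner_cvec divide_eq_eq)
  then show ?thesis by (simp add: zero_sum_vectors_def inner_diff_right inner_cvec_cvec)
qed

lemma row_sum_eq_1:
  fixes R :: "real^'n^'n"
  assumes "R *v cvec = cvec"
  shows "(\<Sum>j\<in>UNIV. R $ i $ j) = 1"
proof -
  have "(R *v cvec) $ i = (\<Sum>j\<in>UNIV. R $ i $ j) / real CARD('n)"
    by (simp add: matrix_vector_mult_def cvec_def sum_divide_distrib)
  then show ?thesis using assms by (simp add: cvec_def)
qed

lemma column_sum_eq_1:
  fixes R :: "real^'n^'n"
  assumes "orthogonal_matrix R" and "R *v cvec = cvec"
  shows "(\<Sum>i\<in>UNIV. R $ i $ j) = 1"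
proof -
  have "(\<Sum>i\<in>UNIV. R $ i $ j) = real CARD('n) * inner cvec (R *v axis j 1)"
    by (simp add: inner_cvec matrix_vector_mult_basis column_def)
  also have "\<dots> = real CARD('n) * inner cvec (axis j 1)"
    using orthogonal_matrix_inner[OF assms(1), of cvec "axis j 1"] assms(2) by simp
  also have "\<dots> = 1" by (simp add: inner_commute[of cvec] inner_axis_cvec)
  finally show ?thesis .
qed

lemma zero_sum_vectors_invariant:
  fixes G :: "(real^'n^'n) set"
  assumes "\<forall>R\<in>G. orthogonal_matrix R \<and> R *v cvec = cvec"
  shows "invariant_under G zero_sum_vectors"
  unfolding invariant_under_def zero_sum_vectors_def
proof (intro ballI)
  fix R and x :: "real^'n" assume "R \<in> G" and "x \<in> {x. inner cvec x = 0}"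
  with assms show "R *v x \<in> {x :: real^'n. inner cvec x = 0}"
    using orthogonal_matrix_inner[of R cvec x] by auto
qed

lemma stochastic_subgroupD:
  assumes "stochastic_subgroup d G"
  shows stochastic_subgroup_orth_subgroup: "orth_subgroup G"
    and stochastic_subgroup_cvec: "R \<in> G \<Longrightarrow> R *v cvec = cvec"
    and stochastic_subgroup_entries: "R \<in> G \<Longrightarrow> \<forall>i j. - 1 / real d \<le> R $ i $ j"
  using assms by (auto simp: stochastic_subgroup_def)

lemma zero_sum_vectors_invariant_stochastic:
  "stochastic_subgroup d G \<Longrightarrow> invariant_under G (zero_sum_vectors :: (real^'n) set)"
  by (intro zero_sum_vectors_invariant) (auto simp: stochastic_subgroup_def orth_subgroup_def)

definition unstretch :: "nat \<Rightarrow> real^'n^'n \<Rightarrow> real^'n^'n" where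
  "unstretch d R = (\<chi> i j. (R $ i $ j + 1 / real d) / (real d + 1))"

context
  fixes d :: nat
  assumes d: "0 < d" and card: "CARD('n::finite) = d^2"
begin

lemma sum_unstretch:
  fixes R :: "real^'n^'n" and w :: "'n \<Rightarrow> real"
  shows "(\<Sum>j\<in>UNIV. w j * unstretch d R $ i $ j)
           = ((\<Sum>j\<in>UNIV. w j * R $ i $ j) + sum w UNIV / real d) / (real d + 1)"
  by (simp add: unstretch_def sum_divide_distrib[symmetric] sum.distrib distrib_left
      sum_distrib_right[symmetric] add_divide_distrib)

lemma unstretch_row_sum:
  fixes R :: "real^'n^'n"
  assumes "(\<Sum>j\<in>UNIV. R $ i $ j) = 1"
  shows "(\<Sum>j\<in>UNIV. unstretch d R $ i $ j) = 1"
  using sum_unstretch[of "\<lambda>_. 1" R i] assms d card by (simp add: power2_eq_square)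

lemma measurement_unstretch:
  fixes R :: "real^'n^'n"
  assumes entries: "\<forall>i j. - 1 / real d \<le> R $ i $ j"
    and columns: "\<forall>j. (\<Sum>i\<in>UNIV. R $ i $ j) = 1"
  shows "measurement (unstretch d R)"
proof -
  have "(\<Sum>i\<in>UNIV. unstretch d R $ i $ j) = 1" for j
  proof -
    have "(\<Sum>i\<in>UNIV. unstretch d R $ i $ j)
        = ((\<Sum>i\<in>UNIV. R $ i $ j) + real CARD('n) / real d) / (real d + 1)"
      by (simp add: unstretch_def sum_divide_distrib[symmetric] sum.distrib)
    then show ?thesis using columns d card by (simp add: power2_eq_square)
  qed
  moreover have "0 \<le> unstretch d R $ i $ j" for i j
    using entries[rule_format, of i j] by (simp add: unstretch_def)
  ultimately show ?thesis by (simp add: measurement_def)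
qed

lemma stretched_unstretch:
  fixes R :: "real^'n^'n"
  assumes rows: "\<forall>i. (\<Sum>j\<in>UNIV. R $ i $ j) = 1"
  shows "stretched d (unstretch d R) = R"
proof -
  have "(real d + 1) * unstretch d R $ i $ j = R $ i $ j + 1 / real d" for i j
    by (simp add: unstretch_def add_pos_pos)
  then show ?thesis
    using unstretch_row_sum rows by (simp add: stretched_def vec_eq_iff)
qed

lemma meas_apply_unstretch:
  fixes R :: "real^'n^'n"
  assumes rows: "\<forall>i. (\<Sum>j\<in>UNIV. R $ i $ j) = 1" and q: "q \<in> Hplane"
  shows "meas_apply d (unstretch d R) q = R *v q"
proof -
  define w where "w j = (real d + 1) * q $ j - 1 / real d" for j
  have "sum w UNIV = 1"
    using q d card
    by (simp add: w_def Hplane_def sum_subtractf sum_distrib_left[symmetric] power2_eq_square)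
  moreover have "(\<Sum>j\<in>UNIV. w j * R $ i $ j) = (real d + 1) * (R *v q) $ i - 1 / real d" for i
  proof -
    have "(\<Sum>j\<in>UNIV. w j * R $ i $ j)
        = (real d + 1) * (\<Sum>j\<in>UNIV. R $ i $ j * q $ j) - (\<Sum>j\<in>UNIV. R $ i $ j) / real d"
      by (simp add: w_def algebra_simps sum_subtractf sum_distrib_left sum_divide_distrib)
    then show ?thesis using rows by (simp add: matrix_vector_mult_def)
  qed
  ultimately show ?thesis
    unfolding meas_apply_def vec_eq_iff using sum_unstretch[of w R]
    by (simp add: w_def[symmetric] add_pos_pos)
qed

lemma preservation_groupI:
  fixes R :: "real^'n^'n"
  assumes "orthogonal_matrix R" and "R *v cvec = cvec" and "\<forall>i j. - 1 / real d \<le> R $ i $ j"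
    and "Q \<subseteq> Hplane" and "(\<lambda>q. R *v q) ` Q = Q"
  shows "R \<in> preservation_group d Q"
proof -
  have rows: "\<forall>i. (\<Sum>j\<in>UNIV. R $ i $ j) = 1" using row_sum_eq_1 assms(2) by blast
  have "meas_apply d (unstretch d R) ` Q = Q"
    using meas_apply_unstretch[OF rows] assms(4,5) by (metis (no_types, lifting) image_cong subsetD)
  moreover have "measurement (unstretch d R)"
    using measurement_unstretch column_sum_eq_1 assms(1-3) by blast
  ultimately have "Q_preserving d Q (unstretch d R)" by (simp add: Q_preserving_def)
  then show ?thesis
    unfolding preservation_group_def using stretched_unstretch[OF rows] by force
qed

end

text \<open>Since \<open>\<langle>c, c\<rangle> = 1/d\<^sup>2\<close>, shifting by c turns the polar bound \<open>1/(d(d+1))\<close> into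
  \<open>1/(d(d+1)) - 1/d\<^sup>2 = - polar_offset d\<close>.\<close>

definition polar_offset :: "nat \<Rightarrow> real" where
  "polar_offset d = 1 / ((real d)^2 * (real d + 1))"

definition centered_vertex :: "nat \<Rightarrow> 'n \<Rightarrow> real^'n" where
  "centered_vertex d j = (1 / (real d + 1)) *\<^sub>R (axis j 1 - cvec)"

definition seed_radius :: "nat \<Rightarrow> real" where
  "seed_radius d = sqrt (polar_offset d / (real d - 1))"

definition seed_set :: "nat \<Rightarrow> (real^'n^'n) set \<Rightarrow> (real^'n) set" where
  "seed_set d G =
     {x \<in> zero_sum_vectors. norm x \<le> seed_radius d}
     \<union> {R *v centered_vertex d j | R j. R \<in> G}"

abbreviation seed_extensions :: "nat \<Rightarrow> (real^'n^'n) set \<Rightarrow> (real^'n) set set" where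
  "seed_extensions d G \<equiv> invariant_pairwise_sets zero_sum_vectors (polar_offset d) G (seed_set d G)"

context
  fixes d :: nat
  assumes d: "2 \<le> d" and card: "CARD('n::finite) = d^2"
begin

lemma polar_offset_pos: "0 < polar_offset d"
  using d by (simp add: polar_offset_def)

lemma inner_shift_cvec:
  assumes "x \<in> zero_sum_vectors" "y \<in> zero_sum_vectors"
  shows "inner (y + cvec) (x + (cvec :: real^'n)) = inner y x + 1 / (real d)^2"
  using assms card
  by (simp add: zero_sum_vectors_def inner_add_left inner_add_right inner_commute[of y]
      inner_cvec_cvec)

lemma polar_shift:
  assumes S: "S \<subseteq> zero_sum_vectors"
  shows "polar d ((\<lambda>x. x + cvec) ` S)
           = (\<lambda>x. x + cvec) ` lower_polar zero_sum_vectors (polar_offset d) (S :: (real^'n) set)"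
proof -
  have offset: "1 / (real d * (real d + 1)) = 1 / (real d)^2 - polar_offset d"
    using d by (simp add: polar_offset_def divide_simps power2_eq_square)
  have "u \<in> polar d ((\<lambda>x. x + cvec) ` S)
          \<longleftrightarrow> u - cvec \<in> lower_polar zero_sum_vectors (polar_offset d) S" for u :: "real^'n"
    using inner_shift_cvec[of _ "u - cvec"] S
    by (auto simp: polar_def lower_polar_def Hplane_iff_zero_sum offset subset_iff)
  then show ?thesis by (auto simp: image_iff intro!: bexI[of _ "_ - cvec"])
qed

lemma centered_vertex_zero_sum: "centered_vertex d j \<in> (zero_sum_vectors :: (real^'n) set)"
  by (simp add: zero_sum_vectors_def centered_vertex_def inner_diff_right
      inner_commute[of cvec "axis j 1"] inner_axis_cvec inner_cvec_cvec)

lemma inner_centered_vertex: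
  assumes "x \<in> zero_sum_vectors"
  shows "inner (centered_vertex d j) (x :: real^'n) = x $ j / (real d + 1)"
  using assms by (simp add: zero_sum_vectors_def centered_vertex_def inner_diff_left inner_axis')

lemma norm_centered_vertex:
  "(norm (centered_vertex d (j :: 'n)))^2 = (real d - 1) * polar_offset d"
proof -
  have "inner (axis j 1 - cvec) (axis j 1 - cvec :: real^'n) = 1 - 1 / (real d)^2"
    using card by (simp add: inner_diff_left inner_diff_right inner_axis_cvec
        inner_commute[of cvec "axis j 1"] inner_cvec_cvec)
  then have "(norm (centered_vertex d j))^2 = (1 - 1 / (real d)^2) / (real d + 1)^2"
    by (simp add: centered_vertex_def power_mult_distrib power2_norm_eq_inner[symmetric]
        power_divide)
  also have "\<dots> = (real d - 1) * polar_offset d"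
    using d by (simp add: polar_offset_def divide_simps power2_eq_square) (simp add: algebra_simps)
  finally show ?thesis .
qed

lemma stochastic_centered_vertex_ge:
  fixes R :: "real^'n^'n"
  assumes "R *v cvec = cvec" and "\<forall>i j. - 1 / real d \<le> R $ i $ j"
  shows "- 1 / (real d)^2 \<le> (R *v centered_vertex d j) $ i"
proof -
  have "(R *v centered_vertex d j) $ i = (R $ i $ j - 1 / (real d)^2) / (real d + 1)"
    using assms(1) card
    by (simp add: centered_vertex_def matrix_vector_mult_scaleR matrix_vector_mult_diff_distrib
        matrix_vector_mult_basis column_def cvec_def)
  moreover have "- 1 / (real d)^2 = (- 1 / real d - 1 / (real d)^2) / (real d + 1)"
    using d by (simp add: divide_simps power2_eq_square)
  ultimately show ?thesis
    using assms(2) d by (simp add: divide_right_mono)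
qed

lemma seed_radius_pos: "0 < seed_radius d"
  using d polar_offset_pos by (simp add: seed_radius_def)

lemma seed_radius_sq_le: "seed_radius d * seed_radius d \<le> polar_offset d"
  using d polar_offset_pos by (simp add: seed_radius_def divide_le_eq)

lemma seed_radius_mult_norm_centered_vertex:
  "seed_radius d * norm (centered_vertex d (j :: 'n)) = polar_offset d"
proof -
  have "norm (centered_vertex d j) = sqrt ((real d - 1) * polar_offset d)"
    using norm_centered_vertex[of j] by (metis norm_ge_zero real_sqrt_unique)
  then show ?thesis
    using d polar_offset_pos by (simp add: seed_radius_def real_sqrt_mult[symmetric])
qed

lemma shift_lower_polar_in_qplex_region:
  assumes ball: "{x \<in> zero_sum_vectors. norm x \<le> seed_radius d} \<subseteq> S"
    and vertices: "\<And>j. centered_vertex d j \<in> S"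
    and y: "y \<in> lower_polar zero_sum_vectors (polar_offset d) (S :: (real^'n) set)"
  shows "y + cvec \<in> Simplex \<inter> out_ball d"
proof -
  have y_zero_sum: "y \<in> zero_sum_vectors" using y by (simp add: lower_polar_def)
  have coordinates: "- 1 / (real d)^2 \<le> y $ j" for j
  proof -
    have "- polar_offset d \<le> inner y (centered_vertex d j)"
      using y vertices by (simp add: lower_polar_def)
    then have "- polar_offset d \<le> y $ j / (real d + 1)"
      by (metis inner_commute inner_centered_vertex[OF y_zero_sum])
    then show ?thesis
      using d by (simp add: polar_offset_def divide_simps power2_eq_square split: if_splits)
  qed
  have "0 \<le> (y + cvec) $ j" for j
    using coordinates[of j] card by (simp add: cvec_def)
  moreover have "(norm y)^2 \<le> out_radius_sq d"
  proof -
    have "seed_radius d * norm y \<le> polar_offset d"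
      using lower_polar_norm_bound[OF subspace_zero_sum_vectors ball _ y] seed_radius_pos by simp
    then have "(seed_radius d * norm y)^2 \<le> (polar_offset d)^2"
      using seed_radius_pos by (intro power_mono) auto
    moreover have "(seed_radius d)^2 = polar_offset d / (real d - 1)"
      using d polar_offset_pos by (simp add: seed_radius_def)
    ultimately have "polar_offset d / (real d - 1) * (norm y)^2 \<le> (polar_offset d)^2"
      by (simp add: power_mult_distrib)
    moreover have "a \<le> e * k" if "0 < k" "0 < e" "k / e * a \<le> k^2" for a e k :: real
      using that by (simp add: field_simps power2_eq_square)
    ultimately have "(norm y)^2 \<le> (real d - 1) * polar_offset d"
      using d polar_offset_pos by simp
    then show ?thesis by (simp add: out_radius_sq_def polar_offset_def)
  qed
  moreover have "y + cvec \<in> Hplane" using y_zero_sum by (simp add: Hplane_iff_zero_sum)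
  ultimately show ?thesis by (auto simp: Simplex_def out_ball_def Hplane_def)
qed

lemma stochastic_orbit_inner_ge:
  fixes G :: "(real^'n^'n) set"
  assumes G: "stochastic_subgroup d G" and R: "R \<in> G" "R' \<in> G"
  shows "- polar_offset d \<le> inner (R *v centered_vertex d j) (R' *v centered_vertex d l)"
proof -
  have G_group: "orth_subgroup G" using G by (rule stochastic_subgroup_orth_subgroup)
  define M where "M = matrix_inv R ** R'"
  have M: "M \<in> G"
    unfolding M_def using R
    by (intro orth_subgroup_mult[OF G_group] orth_subgroup_matrix_inv[OF G_group])
  have "M *v centered_vertex d l \<in> zero_sum_vectors"
    using zero_sum_vectors_invariant_stochastic[OF G] M centered_vertex_zero_sum
    by (auto simp: invariant_under_def)
  then have "inner (R *v centered_vertex d j) (R' *v centered_vertex d l)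
      = (M *v centered_vertex d l) $ j / (real d + 1)"
    using orth_subgroup_orthogonal[OF G_group R(1)]
    by (simp add: orthogonal_matrix_inner_adjoint M_def matrix_vector_mul_assoc
        inner_centered_vertex)
  also have "\<dots> \<ge> (- 1 / (real d)^2) / (real d + 1)"
    using stochastic_centered_vertex_ge[OF stochastic_subgroup_cvec[OF G M]
        stochastic_subgroup_entries[OF G M]]
    by (intro divide_right_mono) auto
  finally show ?thesis by (simp add: polar_offset_def)
qed

lemma seed_set_pairwise:
  fixes G :: "(real^'n^'n) set"
  assumes G: "stochastic_subgroup d G"
  shows "pairwise_inner_ge (polar_offset d) (seed_set d G)"
proof -
  let ?k = "polar_offset d" and ?r = "seed_radius d"
  have bounded: "- ?k \<le> inner x y" if "norm x * norm y \<le> ?k" for x y :: "real^'n"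
    using norm_cauchy_schwarz[of "-x" y] that by simp
  have ball_ball: "- ?k \<le> inner x y" if "norm x \<le> ?r" "norm y \<le> ?r" for x y :: "real^'n"
    using that seed_radius_pos seed_radius_sq_le
    by (intro bounded order.trans[OF mult_mono[of "norm x" ?r "norm y" ?r]]) auto
  have ball_orbit: "- ?k \<le> inner x (R *v centered_vertex d j)"
    if "norm x \<le> ?r" "R \<in> G" for x :: "real^'n" and R j
  proof -
    have "norm (R *v centered_vertex d j) = norm (centered_vertex d j)"
      using orth_subgroup_orthogonal[OF stochastic_subgroup_orth_subgroup[OF G] \<open>R \<in> G\<close>]
      by (rule orthogonal_matrix_norm)
    then show ?thesis
      using that seed_radius_mult_norm_centered_vertex[of j]
      by (intro bounded) (metis mult_right_mono norm_ge_zero)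
  qed
  show ?thesis
    unfolding pairwise_inner_ge_def seed_set_def
    using ball_ball ball_orbit stochastic_orbit_inner_ge[OF G]
    by auto (metis ball_orbit inner_commute)
qed

lemma seed_set_invariant:
  fixes G :: "(real^'n^'n) set"
  assumes G: "stochastic_subgroup d G"
  shows "invariant_under G (seed_set d G)"
proof -
  have G_group: "orth_subgroup G" using G by (rule stochastic_subgroup_orth_subgroup)
  have "R *v (R' *v centered_vertex d j) = (R ** R') *v centered_vertex d j" for R R' j
    by (simp add: matrix_vector_mul_assoc)
  then have orbit: "invariant_under G {R *v centered_vertex d j | R j. R \<in> G}"
    using orth_subgroup_mult[OF G_group] unfolding invariant_under_def by blast
  have "invariant_under G {x \<in> zero_sum_vectors. norm x \<le> seed_radius d}"
    using zero_sum_vectors_invariant_stochastic[OF G] orth_subgroup_orthogonal[OF G_group]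
    by (auto simp: invariant_under_def orthogonal_matrix_norm)
  with orbit show ?thesis
    by (auto simp: seed_set_def invariant_under_def)
qed

lemma seed_set_in_family:
  fixes G :: "(real^'n^'n) set"
  assumes G: "stochastic_subgroup d G"
  shows "seed_set d G \<in> seed_extensions d G"
  using seed_set_pairwise[OF G] seed_set_invariant[OF G]
    zero_sum_vectors_invariant_stochastic[OF G] centered_vertex_zero_sum
  by (auto simp: invariant_pairwise_sets_def seed_set_def invariant_under_def)

lemma qplex_shift_maximal:
  fixes G :: "(real^'n^'n) set"
  assumes G: "stochastic_subgroup d G"
    and S: "maximal_in (seed_extensions d G) S"
  shows "qplex d ((\<lambda>x. x + cvec) ` S)"
proof -
  have self_polar: "lower_polar zero_sum_vectors (polar_offset d) S = S"
    by (rule maximal_lower_polar_eq[OF stochastic_subgroup_orth_subgroup[OF G]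
          subspace_zero_sum_vectors zero_sum_vectors_invariant_stochastic[OF G] polar_offset_pos S])
  have seed: "seed_set d G \<subseteq> S" and S_zero_sum: "S \<subseteq> zero_sum_vectors"
    using S by (auto simp: maximal_in_def invariant_pairwise_sets_def)
  have "centered_vertex d j \<in> S" for j
    using seed orth_subgroup_one[OF stochastic_subgroup_orth_subgroup[OF G]]
    by (force simp: seed_set_def)
  then have "(\<lambda>x. x + cvec) ` S \<subseteq> Simplex \<inter> out_ball d"
    using shift_lower_polar_in_qplex_region[of S] seed self_polar by (auto simp: seed_set_def)
  moreover have "polar d ((\<lambda>x. x + cvec) ` S) = (\<lambda>x. x + cvec) ` S"
    using polar_shift[OF S_zero_sum] self_polar by simp
  ultimately show ?thesis by (simp add: qplex_def)
qed

lemma preservation_group_shift_maximal: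
  fixes G :: "(real^'n^'n) set"
  assumes G: "stochastic_subgroup d G"
    and S: "maximal_in (seed_extensions d G) S"
  shows "G \<subseteq> preservation_group d ((\<lambda>x. x + cvec) ` S)"
proof
  fix R assume R: "R \<in> G"
  have G_group: "orth_subgroup G" using G by (rule stochastic_subgroup_orth_subgroup)
  note R_stochastic = orth_subgroup_orthogonal[OF G_group R] stochastic_subgroup_cvec[OF G R]
    stochastic_subgroup_entries[OF G R]
  have S_zero_sum: "S \<subseteq> zero_sum_vectors" and S_invariant: "invariant_under G S"
    using S by (auto simp: maximal_in_def invariant_pairwise_sets_def)
  have "(\<lambda>q. R *v q) ` (\<lambda>x. x + cvec) ` S = (\<lambda>x. x + cvec) ` (\<lambda>x. R *v x) ` S"
    using R_stochastic(2) by (simp add: image_image matrix_vector_right_distrib)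
  also have "(\<lambda>x. R *v x) ` S = S"
    by (rule invariant_under_image_eq[OF G_group S_invariant R])
  finally have "(\<lambda>q. R *v q) ` (\<lambda>x. x + cvec) ` S = (\<lambda>x. x + cvec) ` S" .
  moreover have "(\<lambda>x. x + cvec) ` S \<subseteq> Hplane"
    using S_zero_sum by (auto simp: Hplane_iff_zero_sum)
  ultimately show "R \<in> preservation_group d ((\<lambda>x. x + cvec) ` S)"
    using preservation_groupI[OF _ _ R_stochastic] d card by simp
qed

end

theorem mainTheorem14:
  fixes d :: nat and G :: "(real^'n^'n) set"
  assumes "d \<ge> 2" and "CARD('n) = d^2"
    and "stochastic_subgroup d G"
  shows "\<exists>Q :: (real^'n) set. qplex d Q \<and> G \<subseteq> preservation_group d Q"
proof -
  obtain S where "maximal_in (seed_extensions d G) S"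
    using invariant_pairwise_sets_has_maximal[OF seed_set_in_family[OF assms]] by blast
  then show ?thesis
    using qplex_shift_maximal[OF assms] preservation_group_shift_maximal[OF assms] by blast
qed

end
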